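(* Fix $L\ge20$. For any pattern $(\mathbf a,\mathbf e)$ there exists $S\subseteq V(\Gamma)$ such that $p_{\mathrm{LD}}((\mathbf a,\mathbf e)_S)\ge p_{\mathrm{LD}}(\mathbf a,\mathbf e)-30L\sqrt d$ and, for all $(i,w)\in S$, \[\sum_{(i',w')\in N_{\Gamma_{\mathrm{LD}}}(i,w)\cap S}\frac{a_{i,w}a_{i',w'}}{n}\Big(1+\frac{\epsilon_{i,w,i',w'}}2\Big)\log(1+\epsilon_{i,w,i',w'})\ge\frac L4\,a_{i,w}\log\Big(\frac{en}{a_{i,w}}\Big),\] where the right side is interpreted as $0$ when $a_{i,w}=0$.
   Context: $d\ge2$, $H$ is a $d$-regular graph on $[h]$. $D^{>0}=\{2^k/\sqrt{nh}:k\in\mathbb{Z},k\ge0\}$; $\Gamma$ is the graph on $[h]\times D^{>0}$ with $(i,w)\sim_\Gamma(i',w')$ iff $ii'\in E(H)$ and $w/w'\in(d^{-1/2},d^{1/2})$. A pattern is $(\mathbf a,\mathbf e)$: nonnegative integers $a_{i,w}$ with $\sum_wa_{i,w}\le n$ for each $i$, $\sum w^2a_{i,w}\le10$, some $w_0\in D^{>0}$ with $a_{i,w}=0$ unless $w_0\le w\le dw_0$; integers $e_{i,w,i',w'}$ for edges of $\Gamma$ (symmetric) with $0\le e\le\min(a_{i,w},a_{i',w'})$. Sub-pattern $(\mathbf a,\mathbf e)_S$: keep $a_{i,w}$ for $(i,w)\in S$ (else $0$) and $e$ on edges inside $S$ (else $0$). $\epsilon_{i,w,i',w'}=e_{i,w,i',w'}n/(a_{i,w}a_{i',w'})-1$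 if $a_{i,w},a_{i',w'}\ne0$, and $=1$ otherwise. $\Gamma_{\mathrm{LD}}=\Gamma_{\mathrm{LD}}(\mathbf a,\mathbf e)$ is the spanning subgraph of $\Gamma$ consisting of the edges with $\epsilon_{i,w,i',w'}>e^2-1$, and $p_{\mathrm{LD}}(\mathbf a,\mathbf e)=\big|\sum_{(i,w)(i',w')\in E(\Gamma_{\mathrm{LD}})}\frac{ww'a_{i,w}a_{i',w'}}{n}\epsilon_{i,w,i',w'}\big|$ (with $\Gamma_{\mathrm{LD}}$ determined by the pattern in question). *)

theory Defs
  imports Complex_Main
begin

type_synonym vtx = "nat \<times> real"

definition Dpos :: "nat \<Rightarrow> nat \<Rightarrow> real set" where
  "Dpos n h = {2 ^ k / sqrt (real n * real h) | k :: nat. True}"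

definition Gvert :: "nat \<Rightarrow> nat \<Rightarrow> vtx set" where
  "Gvert n h = {(i, w). i \<in> {1..h} \<and> w \<in> Dpos n h}"

definition regular_graph :: "(nat \<Rightarrow> nat \<Rightarrow> bool) \<Rightarrow> nat \<Rightarrow> nat \<Rightarrow> bool" where
  "regular_graph Hadj h d \<longleftrightarrow>
     (\<forall>i j. Hadj i j \<longrightarrow> i \<in> {1..h} \<and> j \<in> {1..h} \<and> i \<noteq> j \<and> Hadj j i) \<and>
     (\<forall>i \<in> {1..h}. card {j. Hadj i j} = d)"

definition Gadj :: "(nat \<Rightarrow> nat \<Rightarrow> bool) \<Rightarrow> nat \<Rightarrow> nat \<Rightarrow> nat \<Rightarrow> vtx \<Rightarrow> vtx \<Rightarrow> bool" where
  "Gadj Hadj d n h x y \<longleftrightarrow>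
     x \<in> Gvert n h \<and> y \<in> Gvert n h \<and> Hadj (fst x) (fst y) \<and>
     inverse (sqrt (real d)) < snd x / snd y \<and> snd x / snd y < sqrt (real d)"

text \<open>Patterns. a is extended by 0 outside V(Gamma); e only matters on edges of Gamma.\<close>
definition is_pattern ::
  "(nat \<Rightarrow> nat \<Rightarrow> bool) \<Rightarrow> nat \<Rightarrow> nat \<Rightarrow> nat \<Rightarrow> (vtx \<Rightarrow> nat) \<Rightarrow> (vtx \<Rightarrow> vtx \<Rightarrow> nat) \<Rightarrow> bool" where
  "is_pattern Hadj d n h a e \<longleftrightarrow>
     (\<forall>x. x \<notin> Gvert n h \<longrightarrow> a x = 0) \<and>
     (\<exists>w0 \<in> Dpos n h. \<forall>i w. a (i, w) \<noteq> 0 \<longrightarrow> w0 \<le> w \<and> w \<le> real d * w0) \<and>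
     (\<forall>i. (\<Sum>w | a (i, w) \<noteq> 0. a (i, w)) \<le> n) \<and>
     (\<Sum>x | a x \<noteq> 0. (snd x)\<^sup>2 * real (a x)) \<le> 10 \<and>
     (\<forall>x y. Gadj Hadj d n h x y \<longrightarrow> e x y = e y x \<and> e x y \<le> min (a x) (a y))"

definition sub_a :: "vtx set \<Rightarrow> (vtx \<Rightarrow> nat) \<Rightarrow> vtx \<Rightarrow> nat" where
  "sub_a S a = (\<lambda>x. if x \<in> S then a x else 0)"

definition sub_e :: "vtx set \<Rightarrow> (vtx \<Rightarrow> vtx \<Rightarrow> nat) \<Rightarrow> vtx \<Rightarrow> vtx \<Rightarrow> nat" where
  "sub_e S e = (\<lambda>x y. if x \<in> S \<and> y \<in> S then e x y else 0)"

definition eps :: "nat \<Rightarrow> (vtx \<Rightarrow> nat) \<Rightarrow> (vtx \<Rightarrow> vtx \<Rightarrow> nat) \<Rightarrow> vtx \<Rightarrow> vtx \<Rightarrow> real" where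
  "eps n a e x y =
     (if a x \<noteq> 0 \<and> a y \<noteq> 0 then real (e x y) * real n / (real (a x) * real (a y)) - 1 else 1)"

definition LDadj ::
  "(nat \<Rightarrow> nat \<Rightarrow> bool) \<Rightarrow> nat \<Rightarrow> nat \<Rightarrow> nat \<Rightarrow> (vtx \<Rightarrow> nat) \<Rightarrow> (vtx \<Rightarrow> vtx \<Rightarrow> nat) \<Rightarrow> vtx \<Rightarrow> vtx \<Rightarrow> bool" where
  "LDadj Hadj d n h a e x y \<longleftrightarrow> Gadj Hadj d n h x y \<and> eps n a e x y > (exp 1)\<^sup>2 - 1"

text \<open>p_LD: sum over (unordered) edges of Gamma_LD, written as half the sum over ordered
  adjacent pairs (the summand is symmetric and Gamma is loopless).\<close>
definition pLD ::
  "(nat \<Rightarrow> nat \<Rightarrow> bool) \<Rightarrow> nat \<Rightarrow> nat \<Rightarrow> nat \<Rightarrow> (vtx \<Rightarrow> nat) \<Rightarrow> (vtx \<Rightarrow> vtx \<Rightarrow> nat) \<Rightarrow> real" where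
  "pLD Hadj d n h a e =
     \<bar>(1/2) * (\<Sum>(x, y) \<in> {(x, y). LDadj Hadj d n h a e x y}.
        snd x * snd y * real (a x) * real (a y) / real n * eps n a e x y)\<bar>"

end

theory Submission
  imports Defs
begin

(*
  Proof by greedy peeling. Up to a factor 2, p_LD of a sub-pattern (a,e)_S is the sum Q(S) of
  the edge charges  w w' a a'/n eps  over ordered Gamma_LD-edges inside S. Starting from the
  support of a, delete vertices violating the degree condition one at a time; deleting x lowers
  Q by twice the charge of its edges into the current set. Each edge charge is at most
  4 sqrt d w^2 / log(en/a) times the summand of the degree condition, plus an "excess" arising
  only when the other endpoint is much heavier. So a violating vertex costs at most
  2 (L sqrt d w^2 a + its total excess). Summed over the support, sum w^2 a <= 10 and the dyadic
  spacing of the weights bound the total excess by 40 e sqrt d, so Q drops by <= 60 L sqrt d.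
*)

lemma sq_le_16_exp_half:
  fixes x :: real
  assumes "x \<ge> 0"
  shows "x\<^sup>2 \<le> 16 * exp (x / 2)"
proof -
  have "x / 4 \<le> exp (x / 4)" using exp_ge_add_one_self[of "x / 4"] by linarith
  then have "(x / 4)\<^sup>2 \<le> (exp (x / 4))\<^sup>2" using assms by (intro power_mono) auto
  also have "(exp (x / 4))\<^sup>2 = exp (x / 2)" by (simp add: power2_eq_square flip: exp_add)
  finally show ?thesis by (simp add: power_divide)
qed

text \<open>\<open>K exp (1 - K/2) = O(1/K)\<close>: the factor by which a short-range edge may exceed its budget.\<close>
lemma mult_exp_decay_le:
  fixes K :: real
  assumes "K > 0"
  shows "K * exp (1 - K / 2) \<le> 16 * exp 1 / K"
proof -
  have "K\<^sup>2 * exp (1 - K / 2) \<le> 16 * exp (K / 2) * exp (1 - K / 2)"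
    using sq_le_16_exp_half[of K] assms by (intro mult_right_mono) auto
  also have "\<dots> = 16 * exp 1" by (simp flip: exp_add)
  finally show ?thesis using assms by (simp add: field_simps power2_eq_square)
qed

text \<open>The threshold \<open>e\<^sup>2 - 1\<close> defining \<open>\<Gamma>\<^sub>L\<^sub>D\<close> exceeds the default value \<open>\<epsilon> = 1\<close>.\<close>
lemma exp1_sq_minus_one_ge_one: "(exp (1::real))\<^sup>2 - 1 \<ge> 1"
proof -
  have "(2::real)\<^sup>2 \<le> (exp 1)\<^sup>2" using exp_ge_add_one_self[of 1] by (intro power_mono) auto
  then show ?thesis by simp
qed

lemma log_density_bounds:
  fixes a b n E :: real
  assumes "a > 0" "b > 0" "n > 0" "E \<le> b" and big: "E * n / (a * b) > (exp 1)\<^sup>2"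
  shows "2 < ln (E * n / (a * b))" and "ln (E * n / (a * b)) < ln (exp 1 * n / a)"
proof -
  have exp2: "exp (2::real) = (exp 1)\<^sup>2" by (simp add: power2_eq_square flip: exp_add)
  then have "ln (exp 2) < ln (E * n / (a * b))" using big by (intro ln_strict_mono) auto
  then show "2 < ln (E * n / (a * b))" by simp
  have pos: "0 < E * n / (a * b)" using big exp2 exp_gt_zero[of 2] by linarith
  have "E * n / (a * b) \<le> b * n / (a * b)"
    using assms by (intro divide_right_mono mult_right_mono) auto
  also have "\<dots> = n / a" using assms by simp
  also have "\<dots> < exp 1 * n / a" using assms by (simp add: divide_strict_right_mono)
  finally show "ln (E * n / (a * b)) < ln (exp 1 * n / a)" using pos by (rule ln_strict_mono)
qed

text \<open>Splitting the product of two weights \<open>w v\<close> (with \<open>v/w < s\<close>) against the ratio \<open>l/K\<close>: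
  either \<open>w v\<close> is charged to \<open>w\<^sup>2 l/K\<close>, or, by AM--GM, partly to the larger weight \<open>v\<close>.
  The second summand is the excess of an edge.\<close>
lemma weight_split:
  fixes w v E s l K :: real
  assumes "w > 0" "v > 0" "E \<ge> 0" "s > 0" "v / w < s" "0 < l" "l < K"
  shows "w * v * E \<le> 2 * s * w\<^sup>2 * E * l / K
           + (if l < K / 2 \<and> v / w > s * l / K then v\<^sup>2 * E * K / (2 * s * l) else 0)"
proof -
  define lam where "lam = s * l / K"
  have Kpos: "K > 0" and lam: "lam > 0" using assms unfolding lam_def by auto
  have wvE: "w * v * E = v / w * (w\<^sup>2 * E)" using \<open>w > 0\<close> by (simp add: power2_eq_square)
  have base: "0 \<le> w\<^sup>2 * E" using assms by simp
  consider (far) "K / 2 \<le> l" | (near) "l < K / 2" "v / w \<le> lam" | (spread) "l < K / 2" "lam < v / w"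
    by linarith
  then show ?thesis
  proof cases
    case far
    have "w * v * E \<le> s * (w\<^sup>2 * E)"
      unfolding wvE using assms base by (intro mult_right_mono) auto
    also have "\<dots> \<le> (2 * l / K) * (s * (w\<^sup>2 * E))"
    proof -
      have "1 \<le> 2 * l / K" using far Kpos by (simp add: field_simps)
      then show ?thesis using mult_right_mono[of 1 "2 * l / K" "s * (w\<^sup>2 * E)"] assms base by simp
    qed
    finally show ?thesis using far by (simp add: field_simps)
  next
    case near
    have "w * v * E \<le> lam * (w\<^sup>2 * E)"
      unfolding wvE using near base by (intro mult_right_mono) auto
    also have "\<dots> \<le> 2 * lam * (w\<^sup>2 * E)" using lam base by (simp add: mult.commute)
    finally show ?thesis using near unfolding lam_def by (simp add: field_simps)
  next
    case spread
    \<comment> \<open>AM--GM with the weight \<open>lam\<close> balancing the two sides\<close>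
    have "2 * lam * (w * v) \<le> lam\<^sup>2 * w\<^sup>2 + v\<^sup>2"
      using sum_squares_ge_zero[of "lam * w - v" 0] by (simp add: power2_eq_square algebra_simps)
    then have amgm: "w * v \<le> (lam * w\<^sup>2 + v\<^sup>2 / lam) / 2"
      using lam by (simp add: field_simps power2_eq_square)
    have "w * v * E \<le> (lam * w\<^sup>2 + v\<^sup>2 / lam) / 2 * E"
      using amgm assms by (intro mult_right_mono) auto
    also have "\<dots> = s * w\<^sup>2 * E * l / K / 2 + v\<^sup>2 * E * K / (2 * s * l)"
      unfolding lam_def using assms Kpos by (simp add: field_simps)
    also have "\<dots> \<le> 2 * s * w\<^sup>2 * E * l / K + v\<^sup>2 * E * K / (2 * s * l)"
      using assms Kpos base by (simp add: field_simps)
    finally show ?thesis using spread unfolding lam_def by simp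
  qed
qed

text \<open>The excess term is small when it occurs: it is at most \<open>2 e v\<^sup>2 b (v/w) / s\<^sup>2\<close>, a bound
  charged to the heavier endpoint.\<close>
lemma excess_bound:
  fixes a b n r s v w K :: real
  assumes "a > 0" "n > 0" "b \<ge> 0" "s > 0" "w > 0" "v > 0" "r > 0"
    and K: "K = ln (exp 1 * n / a)"
    and lr: "2 < ln r" "ln r < K / 2" and spread: "v / w > s * ln r / K"
  shows "v\<^sup>2 * (r * (a * b / n)) * K / (2 * s * ln r) \<le> 2 * exp 1 * v\<^sup>2 * b * (v / w) / s\<^sup>2"
proof -
  have Kpos: "K > 0" using lr by simp
  have a_n: "a / n = exp (1 - K)"
    using K assms by (simp add: exp_diff field_simps)
  have "r < exp (K / 2)" using lr \<open>r > 0\<close> by (metis exp_less_cancel_iff exp_ln)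
  then have "r * (a / n) * b \<le> exp (K / 2) * (a / n) * b"
    using assms by (intro mult_right_mono) auto
  also have "\<dots> = b * exp (1 - K / 2)" unfolding a_n by (simp add: mult.commute flip: exp_add)
  finally have E_le: "r * (a * b / n) \<le> b * exp (1 - K / 2)" by simp
  have inv_K: "1 / K < v / w / (2 * s)"
  proof -
    have "s * 2 / K < s * ln r / K" using lr \<open>s > 0\<close> Kpos by (intro divide_strict_right_mono) auto
    then have "s * 2 / K < v / w" using spread by linarith
    then show ?thesis using \<open>s > 0\<close> \<open>w > 0\<close> Kpos by (simp add: field_simps)
  qed
  have "v\<^sup>2 * (r * (a * b / n)) * K / (2 * s * ln r) \<le> v\<^sup>2 * (r * (a * b / n)) * K / (4 * s)"
  proof -
    have "2 * s * 2 \<le> 2 * s * ln r" using lr \<open>s > 0\<close> by (intro mult_left_mono) auto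
    moreover have "0 < 2 * s * 2" "0 \<le> v\<^sup>2 * (r * (a * b / n)) * K"
      using assms Kpos by auto
    ultimately show ?thesis by (intro divide_left_mono) auto
  qed
  also have "\<dots> \<le> v\<^sup>2 * (b * exp (1 - K / 2)) * K / (4 * s)"
    using E_le Kpos \<open>s > 0\<close> by (intro divide_right_mono mult_right_mono mult_left_mono) auto
  also have "\<dots> = v\<^sup>2 * b * (K * exp (1 - K / 2)) / (4 * s)" by (simp add: ac_simps)
  also have "\<dots> \<le> v\<^sup>2 * b * (16 * exp 1 / K) / (4 * s)"
    using mult_exp_decay_le[OF Kpos] assms by (intro divide_right_mono mult_left_mono) auto
  also have "\<dots> = 4 * exp 1 * v\<^sup>2 * b / s * (1 / K)" by (simp add: field_simps)
  also have "\<dots> \<le> 4 * exp 1 * v\<^sup>2 * b / s * (v / w / (2 * s))"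
    using inv_K assms by (intro mult_left_mono) auto
  also have "\<dots> = 2 * exp 1 * v\<^sup>2 * b * (v / w) / s\<^sup>2"
    using assms by (simp add: field_simps power2_eq_square)
  finally show ?thesis .
qed

lemma finite_Dpos_bounded: "finite {w \<in> Dpos n h. w \<le> c}"
proof -
  define s where "s = sqrt (real n * real h)"
  define M where "M = nat \<lceil>c * s\<rceil>"
  have "{w \<in> Dpos n h. w \<le> c} \<subseteq> (\<lambda>k::nat. 2 ^ k / s) ` {..M}"
  proof
    fix w assume "w \<in> {w \<in> Dpos n h. w \<le> c}"
    then obtain k :: nat where w: "w = 2 ^ k / s" and le: "w \<le> c"
      unfolding Dpos_def s_def by blast
    show "w \<in> (\<lambda>k::nat. 2 ^ k / s) ` {..M}"
    proof (cases "s = 0")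
      case True
      then show ?thesis using w by (intro image_eqI[of _ _ 0]) auto
    next
      case False
      then have "s > 0" unfolding s_def by simp
      have "k < 2 ^ k" by (rule less_exp)
      then have "real k < 2 ^ k" by (metis of_nat_less_iff of_nat_numeral of_nat_power)
      moreover have "2 ^ k \<le> c * s" using le w \<open>s > 0\<close> by (simp add: field_simps)
      ultimately have "real k < c * s" by linarith
      then have "k \<le> M" unfolding M_def by linarith
      then show ?thesis using w by blast
    qed
  qed
  then show ?thesis by (rule finite_subset) simp
qed

text \<open>Distinct dyadic weights \<open>w\<close> with \<open>v/w < c\<close> form a geometric progression of ratios, so
  \<open>\<Sum> v/w < 2c\<close>.\<close>
lemma dyadic_ratio_sum:
  assumes "n > 0" "h > 0" "finite W" "W \<subseteq> Dpos n h" "v \<in> Dpos n h"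
    and "c \<ge> 0" and below: "\<forall>w\<in>W. v / w < c"
  shows "(\<Sum>w\<in>W. v / w) \<le> 2 * c"
proof (cases "W = {}")
  case True then show ?thesis using \<open>c \<ge> 0\<close> by simp
next
  case False
  define s where "s = sqrt (real n * real h)"
  have "s > 0" using assms unfolding s_def by simp
  define expo where "expo w = (SOME k :: nat. w = 2 ^ k / s)" for w
  have expo: "w = 2 ^ expo w / s" if "w \<in> Dpos n h" for w
    unfolding expo_def by (rule someI_ex) (use that in \<open>auto simp: Dpos_def s_def\<close>)
  define m where "m = Min (expo ` W)"
  have "m \<in> expo ` W" unfolding m_def using assms False by simp
  then obtain w0 where w0: "w0 \<in> W" "expo w0 = m" by auto
  have w0_eq: "w0 = 2 ^ m / s" using expo[of w0] w0 assms(4) by auto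
  have m_le: "m \<le> expo w" if "w \<in> W" for w
    using assms that unfolding m_def by simp
  \<comment> \<open>every ratio is the largest one times a distinct power of \<open>1/2\<close>\<close>
  have ratio: "v / w = v / w0 * (1/2) ^ (expo w - m)" if "w \<in> W" for w
  proof -
    have "w = 2 ^ m * 2 ^ (expo w - m) / s"
      using expo[of w] that assms m_le[OF that] by (auto simp flip: power_add)
    also have "\<dots> = w0 * 2 ^ (expo w - m)" using w0_eq by simp
    finally have "w = w0 * 2 ^ (expo w - m)" .
    then show ?thesis by (simp add: power_one_over)
  qed
  have inj: "inj_on (\<lambda>w. expo w - m) W"
  proof (rule inj_onI)
    fix x y assume "x \<in> W" "y \<in> W" "expo x - m = expo y - m"
    then have "expo x = expo y" using m_le[of x] m_le[of y] \<open>x \<in> W\<close> \<open>y \<in> W\<close> by arith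
    moreover have "x = 2 ^ expo x / s" "y = 2 ^ expo y / s"
      using expo \<open>x \<in> W\<close> \<open>y \<in> W\<close> assms(4) by blast+
    ultimately show "x = y" by simp
  qed
  have "(\<Sum>w\<in>W. v / w) = (\<Sum>w\<in>W. v / w0 * (1/2) ^ (expo w - m))"
    using ratio by (rule sum.cong[OF refl])
  also have "\<dots> = v / w0 * (\<Sum>j\<in>(\<lambda>w. expo w - m) ` W. (1/2::real) ^ j)"
    using inj by (simp add: sum_distrib_left sum.reindex)
  also have "\<dots> \<le> v / w0 * 2"
  proof (rule mult_left_mono)
    show "(\<Sum>j\<in>(\<lambda>w. expo w - m) ` W. (1/2::real) ^ j) \<le> 2"
      using geometric_sum_less[of "1/2::real" "(\<lambda>w. expo w - m) ` W"] \<open>finite W\<close> by simp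
    have "0 \<le> v" using \<open>v \<in> Dpos n h\<close> by (auto simp: Dpos_def)
    then show "0 \<le> v / w0" using w0_eq \<open>s > 0\<close> by simp
  qed
  also have "\<dots> < 2 * c" using bspec[OF below w0(1)] by (simp only: mult.commute[of _ 2] mult_less_cancel_left_pos[of 2])
  finally show ?thesis by simp
qed

definition pair_sum :: "('a \<Rightarrow> 'a \<Rightarrow> bool) \<Rightarrow> ('a \<Rightarrow> 'a \<Rightarrow> real) \<Rightarrow> 'a set \<Rightarrow> real" where
  "pair_sum R t T = (\<Sum>(x, y) \<in> {(x, y). R x y \<and> x \<in> T \<and> y \<in> T}. t x y)"

lemma pair_sum_remove:
  assumes "finite T" "x \<in> T" and irrefl: "\<not> R x x"
    and sym: "\<And>u v. R u v \<Longrightarrow> R v u \<and> t v u = t u v"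
  shows "pair_sum R t T = pair_sum R t (T - {x}) + 2 * (\<Sum>y \<in> {y. R x y} \<inter> T. t x y)"
proof -
  define A where "A = {y. R x y} \<inter> T"
  define P where "P U = {(u, v). R u v \<and> u \<in> U \<and> v \<in> U}" for U
  have finP: "finite (P U)" if "finite U" for U
    using finite_cartesian_product[OF that that] by (rule finite_subset[rotated]) (auto simp: P_def)
  have finA: "finite A" using \<open>finite T\<close> unfolding A_def by simp
  have split: "P T = P (T - {x}) \<union> (Pair x ` A \<union> (\<lambda>y. (y, x)) ` A)"
    using \<open>x \<in> T\<close> sym unfolding P_def A_def by auto
  have out: "(\<Sum>(u, v) \<in> Pair x ` A. t u v) = (\<Sum>y\<in>A. t x y)"
    by (subst sum.reindex) (auto intro: inj_onI)
  have "(\<Sum>(u, v) \<in> (\<lambda>y. (y, x)) ` A. t u v) = (\<Sum>y\<in>A. t y x)"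
    by (subst sum.reindex) (auto intro: inj_onI)
  also have "\<dots> = (\<Sum>y\<in>A. t x y)" using sym by (intro sum.cong) (auto simp: A_def)
  finally have into: "(\<Sum>(u, v) \<in> (\<lambda>y. (y, x)) ` A. t u v) = (\<Sum>y\<in>A. t x y)" .
  have disj1: "P (T - {x}) \<inter> (Pair x ` A \<union> (\<lambda>y. (y, x)) ` A) = {}" unfolding P_def by auto
  have disj2: "Pair x ` A \<inter> (\<lambda>y. (y, x)) ` A = {}" using irrefl unfolding A_def by auto
  have "pair_sum R t T = pair_sum R t (T - {x})
      + (\<Sum>(u, v) \<in> Pair x ` A \<union> (\<lambda>y. (y, x)) ` A. t u v)"
    unfolding pair_sum_def P_def[symmetric] split
    by (rule sum.union_disjoint) (use finP[of "T - {x}"] finA disj1 \<open>finite T\<close> in auto)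
  also have "(\<Sum>(u, v) \<in> Pair x ` A \<union> (\<lambda>y. (y, x)) ` A. t u v)
      = (\<Sum>(u, v) \<in> Pair x ` A. t u v) + (\<Sum>(u, v) \<in> (\<lambda>y. (y, x)) ` A. t u v)"
    by (rule sum.union_disjoint) (use finA disj2 in auto)
  also have "\<dots> = 2 * (\<Sum>y\<in>A. t x y)" unfolding out into by simp
  finally show ?thesis unfolding A_def .
qed

lemma greedy_peeling:
  fixes Q :: "'a set \<Rightarrow> real" and cost :: "'a \<Rightarrow> real"
  assumes "finite T"
    and drop: "\<And>U x. U \<subseteq> T \<Longrightarrow> x \<in> U \<Longrightarrow> \<not> good U x \<Longrightarrow> Q U - Q (U - {x}) \<le> cost x"
  shows "\<exists>S \<subseteq> T. (\<forall>x\<in>S. good S x) \<and> Q T - Q S \<le> (\<Sum>x \<in> T - S. cost x)"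
  using assms
proof (induction "card T" arbitrary: T rule: less_induct)
  case less
  show ?case
  proof (cases "\<forall>x\<in>T. good T x")
    case True
    then show ?thesis by auto
  next
    case False
    then obtain x where x: "x \<in> T" "\<not> good T x" by auto
    have smaller: "card (T - {x}) < card T" using less.prems(1) x(1) by (rule card_Diff1_less)
    have fin: "finite (T - {x})" using less.prems(1) by simp
    have drop_smaller: "Q U - Q (U - {y}) \<le> cost y" if "U \<subseteq> T - {x}" "y \<in> U" "\<not> good U y" for U y
      using less.prems(2) that by blast
    obtain S where S: "S \<subseteq> T - {x}" "\<forall>y\<in>S. good S y"
        "Q (T - {x}) - Q S \<le> (\<Sum>y \<in> T - {x} - S. cost y)"
      using less.hyps[OF smaller fin drop_smaller] by blast
    have "T - S = insert x (T - {x} - S)" using S(1) x(1) by auto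
    then have "(\<Sum>y \<in> T - S. cost y) = cost x + (\<Sum>y \<in> T - {x} - S. cost y)"
      using less.prems(1) by simp
    moreover have "Q T - Q (T - {x}) \<le> cost x" using less.prems(2) x by blast
    ultimately show ?thesis using S by (intro exI[of _ S]) auto
  qed
qed

lemma Dpos_pos: "n > 0 \<Longrightarrow> h > 0 \<Longrightarrow> w \<in> Dpos n h \<Longrightarrow> w > 0"
  by (auto simp: Dpos_def)

locale pattern_setting =
  fixes Hadj :: "nat \<Rightarrow> nat \<Rightarrow> bool" and d n h :: nat and L :: real
    and a :: "vtx \<Rightarrow> nat" and e :: "vtx \<Rightarrow> vtx \<Rightarrow> nat"
  assumes two_le_d: "d \<ge> 2" and regular: "regular_graph Hadj h d" and L_ge: "L \<ge> 20"
    and pattern: "is_pattern Hadj d n h a e"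
begin

abbreviation LD :: "vtx \<Rightarrow> vtx \<Rightarrow> bool" where
  "LD \<equiv> LDadj Hadj d n h a e"

lemma pattern_zero_outside: "\<forall>x. x \<notin> Gvert n h \<longrightarrow> a x = 0"
  using pattern unfolding is_pattern_def by (elim conjE) assumption

lemma pattern_range: "\<exists>w0 \<in> Dpos n h. \<forall>i w. a (i, w) \<noteq> 0 \<longrightarrow> w0 \<le> w \<and> w \<le> real d * w0"
  using pattern unfolding is_pattern_def by (elim conjE) assumption

lemma pattern_mass: "(\<Sum>x | a x \<noteq> 0. (snd x)\<^sup>2 * real (a x)) \<le> 10"
  using pattern unfolding is_pattern_def by (elim conjE) assumption

lemma pattern_edges: "\<forall>x y. Gadj Hadj d n h x y \<longrightarrow> e x y = e y x \<and> e x y \<le> min (a x) (a y)"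
  using pattern unfolding is_pattern_def by (elim conjE) assumption

lemma LD_Gadj: "LD x y \<Longrightarrow> Gadj Hadj d n h x y"
  by (simp add: LDadj_def)

text \<open>Edges of \<open>\<Gamma>\<^sub>L\<^sub>D\<close> only join vertices of the support (otherwise \<open>\<epsilon> = 1\<close>).\<close>
lemma LD_pos:
  assumes "LD x y"
  shows "0 < a x" "0 < a y" "0 < n"
proof -
  have big: "eps n a e x y > (exp 1)\<^sup>2 - 1" using assms by (simp add: LDadj_def)
  then show ax: "0 < a x" and ay: "0 < a y"
    using exp1_sq_minus_one_ge_one by (auto simp: eps_def split: if_splits)
  show "0 < n" using big ax ay exp1_sq_minus_one_ge_one by (cases n) (auto simp: eps_def)
qed

lemma LD_eps: "LD x y \<Longrightarrow> eps n a e x y = real (e x y) * real n / (real (a x) * real (a y)) - 1"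
  using LD_pos[of x y] by (simp add: eps_def)

lemma LD_Gvert: "LD x y \<Longrightarrow> x \<in> Gvert n h \<and> y \<in> Gvert n h"
  by (simp add: LDadj_def Gadj_def)

lemma LD_weights_pos:
  assumes "LD x y"
  shows "0 < snd x" "0 < snd y"
proof -
  have "h > 0" and D: "snd x \<in> Dpos n h" "snd y \<in> Dpos n h"
    using LD_Gvert[OF assms] by (auto simp: Gvert_def)
  then show "0 < snd x" "0 < snd y" using Dpos_pos[OF LD_pos(3)[OF assms] \<open>h > 0\<close>] by blast+
qed

lemma LD_e_le:
  assumes "LD x y"
  shows "e x y \<le> a x" "e x y \<le> a y" "e y x = e x y"
proof -
  have "e x y = e y x \<and> e x y \<le> min (a x) (a y)" using pattern_edges LD_Gadj[OF assms] by blast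
  then show "e x y \<le> a x" "e x y \<le> a y" "e y x = e x y" by auto
qed

lemma LD_weight_ratio:
  assumes "LD x y"
  shows "snd y / snd x < sqrt d"
proof -
  have "inverse (sqrt d) < snd x / snd y" using LD_Gadj[OF assms] by (simp add: Gadj_def)
  then show ?thesis using LD_weights_pos[OF assms] two_le_d by (simp add: field_simps)
qed

lemma LD_eps_sym: "LD x y \<Longrightarrow> eps n a e y x = eps n a e x y"
  using LD_e_le(3)[of x y] by (simp add: eps_def mult.commute)

lemma LD_sym:
  assumes "LD x y"
  shows "LD y x"
proof -
  have G: "Gadj Hadj d n h x y" by (rule LD_Gadj[OF assms])
  have "Hadj (fst y) (fst x)" using regular G by (auto simp: regular_graph_def Gadj_def)
  moreover have "inverse (sqrt d) < snd y / snd x"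
    using G LD_weights_pos[OF assms] two_le_d by (simp add: Gadj_def field_simps)
  ultimately have "Gadj Hadj d n h y x"
    using G LD_weight_ratio[OF assms] by (simp add: Gadj_def)
  moreover have "eps n a e y x = eps n a e x y" using LD_eps_sym[OF assms] .
  ultimately show ?thesis using assms by (simp add: LDadj_def)
qed

lemma LD_irrefl: "\<not> LD x x"
  using regular by (auto simp: LDadj_def Gadj_def regular_graph_def)

definition support :: "vtx set" where
  "support = {x. a x \<noteq> 0}"

lemma support_Gvert: "support \<subseteq> Gvert n h"
proof
  fix x assume "x \<in> support"
  then have "a x \<noteq> 0" by (simp add: support_def)
  then show "x \<in> Gvert n h" using pattern_zero_outside by metis
qed

lemma LD_support: "LD x y \<Longrightarrow> x \<in> support \<and> y \<in> support"
  using LD_pos[of x y] by (simp add: support_def)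

text \<open>The support is finite: its weights lie in a dyadic window \<open>[w\<^sub>0, d w\<^sub>0]\<close>.\<close>
lemma finite_support: "finite support"
proof -
  obtain w0 where range: "\<forall>i w. a (i, w) \<noteq> 0 \<longrightarrow> w0 \<le> w \<and> w \<le> real d * w0"
    using pattern_range by blast
  have "support \<subseteq> {1..h} \<times> {w \<in> Dpos n h. w \<le> real d * w0}"
  proof
    fix x assume x: "x \<in> support"
    obtain i w where iw: "x = (i, w)" by fastforce
    have "a (i, w) \<noteq> 0" using x iw by (simp add: support_def)
    then have "w \<le> real d * w0" using range by blast
    moreover have "i \<in> {1..h}" "w \<in> Dpos n h" using support_Gvert x iw by (auto simp: Gvert_def)
    ultimately show "x \<in> {1..h} \<times> {w \<in> Dpos n h. w \<le> real d * w0}" using iw by simp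
  qed
  moreover have "finite ({1..h} \<times> {w \<in> Dpos n h. w \<le> real d * w0})"
    by (rule finite_cartesian_product[OF finite_atLeastAtMost finite_Dpos_bounded])
  ultimately show ?thesis by (rule finite_subset)
qed

lemma support_mass: "(\<Sum>x\<in>support. (snd x)\<^sup>2 * real (a x)) \<le> 10"
  using pattern_mass by (simp add: support_def)

text \<open>Edge quantities for an edge \<open>x y\<close>: its contribution to \<open>p\<^sub>L\<^sub>D\<close>, its contribution to the
  degree condition, its density \<open>r = 1 + \<epsilon>\<close>, the log-scale \<open>K = log (e n/a\<^sub>x)\<close> of \<open>x\<close>, and the
  excess part of its charge.\<close>
definition pterm :: "vtx \<Rightarrow> vtx \<Rightarrow> real" where
  "pterm x y = snd x * snd y * real (a x) * real (a y) / real n * eps n a e x y"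

definition gain :: "vtx \<Rightarrow> vtx \<Rightarrow> real" where
  "gain x y = real (a x) * real (a y) / real n * (1 + eps n a e x y / 2) * ln (1 + eps n a e x y)"

definition density :: "vtx \<Rightarrow> vtx \<Rightarrow> real" where
  "density x y = real (e x y) * real n / (real (a x) * real (a y))"

definition scale :: "vtx \<Rightarrow> real" where
  "scale x = ln (exp 1 * real n / real (a x))"

definition excess :: "vtx \<Rightarrow> vtx \<Rightarrow> real" where
  "excess x y =
     (if ln (density x y) < scale x / 2 \<and> snd y / snd x > sqrt d * ln (density x y) / scale x
      then (snd y)\<^sup>2 * real (e x y) * scale x / (2 * sqrt d * ln (density x y)) else 0)"

lemma LD_density:
  assumes "LD x y"
  shows "eps n a e x y = density x y - 1"
    and "real (e x y) = density x y * (real (a x) * real (a y) / real n)"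
    and "(exp 1)\<^sup>2 < density x y"
    and "2 < ln (density x y)" and "ln (density x y) < scale x"
proof -
  show eps: "eps n a e x y = density x y - 1" using LD_eps[OF assms] by (simp add: density_def)
  have pos: "0 < real (a x)" "0 < real (a y)" "0 < real n" using LD_pos[OF assms] by auto
  then show "real (e x y) = density x y * (real (a x) * real (a y) / real n)"
    by (simp add: density_def)
  show big: "(exp 1)\<^sup>2 < density x y" using assms eps by (simp add: LDadj_def)
  then show "2 < ln (density x y)" "ln (density x y) < scale x"
    using log_density_bounds[OF pos(1,2,3)] LD_e_le(2)[OF assms]
    unfolding density_def scale_def by auto
qed

lemma scale_pos:
  assumes "LD x y"
  shows "0 < scale x"
  using LD_density(4,5)[OF assms] by linarith

lemma gain_lower:
  assumes "LD x y"
  shows "real (e x y) * ln (density x y) / 2 \<le> gain x y"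
proof -
  define c where "c = real (a x) * real (a y) / real n"
  define r where "r = density x y"
  have "c \<ge> 0" and "ln r > 0" using LD_density(4)[OF assms] unfolding c_def r_def by auto
  have "real (e x y) * ln r / 2 = c * (r / 2) * ln r"
    using LD_density(2)[OF assms] unfolding c_def r_def by simp
  also have "\<dots> \<le> c * ((r + 1) / 2) * ln r"
    using \<open>c \<ge> 0\<close> \<open>ln r > 0\<close> by (intro mult_right_mono mult_left_mono) auto
  also have "\<dots> = gain x y"
    unfolding gain_def LD_density(1)[OF assms] c_def r_def by (simp add: field_simps)
  finally show ?thesis unfolding r_def .
qed

lemma gain_nonneg:
  assumes "LD x y"
  shows "0 \<le> gain x y"
proof -
  have "0 \<le> real (e x y) * ln (density x y) / 2" using LD_density(4)[OF assms] by simp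
  then show ?thesis using gain_lower[OF assms] by linarith
qed

lemma excess_nonneg:
  assumes "LD x y"
  shows "0 \<le> excess x y"
  using LD_density(4)[OF assms] scale_pos[OF assms] by (simp add: excess_def)

lemma pterm_bound:
  assumes "LD x y"
  shows "pterm x y \<le> 4 * sqrt d * (snd x)\<^sup>2 / scale x * gain x y + excess x y"
proof -
  define E where "E = real (e x y)"
  have w: "0 < snd x" "0 < snd y" using LD_weights_pos[OF assms] .
  have d: "0 < sqrt d" using two_le_d by simp
  have K: "0 < scale x" using scale_pos[OF assms] .
  have "pterm x y = snd x * snd y * (real (a x) * real (a y) / real n * (density x y - 1))"
    using LD_density(1)[OF assms] unfolding pterm_def by simp
  also have "\<dots> \<le> snd x * snd y * E"
  proof -
    define c where "c = real (a x) * real (a y) / real n"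
    have "0 \<le> c" unfolding c_def by simp
    then have "c * (density x y - 1) \<le> c * density x y" by (simp add: algebra_simps)
    also have "\<dots> = E" using LD_density(2)[OF assms] unfolding E_def c_def by simp
    finally have "real (a x) * real (a y) / real n * (density x y - 1) \<le> E" unfolding c_def .
    then show ?thesis using w by (intro mult_left_mono) auto
  qed
  also have "\<dots> \<le> 2 * sqrt d * (snd x)\<^sup>2 * E * ln (density x y) / scale x + excess x y"
    unfolding excess_def E_def
    by (rule weight_split[OF w _ d LD_weight_ratio[OF assms] _ LD_density(5)[OF assms]])
      (use LD_density(4)[OF assms] in auto)
  also have "2 * sqrt d * (snd x)\<^sup>2 * E * ln (density x y) / scale x
      = 4 * sqrt d * (snd x)\<^sup>2 / scale x * (E * ln (density x y) / 2)" by simp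
  also have "\<dots> \<le> 4 * sqrt d * (snd x)\<^sup>2 / scale x * gain x y"
    using gain_lower[OF assms] d K unfolding E_def by (intro mult_left_mono) auto
  finally show ?thesis by simp
qed

text \<open>The excess of an edge is paid by the heavier endpoint \<open>y\<close>.\<close>
lemma excess_le:
  assumes "LD x y"
  shows "excess x y \<le> 2 * exp 1 * (snd y)\<^sup>2 * real (a y) * (snd y / snd x) / real d"
proof (cases "ln (density x y) < scale x / 2 \<and> snd y / snd x > sqrt d * ln (density x y) / scale x")
  case True
  have pos: "0 < real (a x)" "0 < real n" "0 < snd x" "0 < snd y" "0 < density x y"
    using LD_pos[OF assms] LD_weights_pos[OF assms] LD_density(3)[OF assms]
    by (auto intro: less_trans[OF zero_less_power[OF exp_gt_zero]])
  have "excess x y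
      = (snd y)\<^sup>2 * (density x y * (real (a x) * real (a y) / real n)) * scale x
        / (2 * sqrt d * ln (density x y))"
    using True LD_density(2)[OF assms] by (simp add: excess_def)
  also have "\<dots> \<le> 2 * exp 1 * (snd y)\<^sup>2 * real (a y) * (snd y / snd x) / (sqrt d)\<^sup>2"
  proof (rule excess_bound[OF pos(1,2) _ _ pos(3,4,5) scale_def LD_density(4)[OF assms]])
    show "0 \<le> real (a y)" "0 < sqrt d" using two_le_d by auto
  qed (use True in auto)
  finally show ?thesis by (simp only: real_sqrt_pow2 of_nat_0_le_iff)
next
  case False
  then have "excess x y = 0" unfolding excess_def by (rule if_not_P)
  then show ?thesis using LD_weights_pos[OF assms] by simp
qed

definition threshold :: "vtx \<Rightarrow> real" where
  "threshold x = (if a x = 0 then 0 else L / 4 * real (a x) * ln (exp 1 * real n / real (a x)))"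

definition well_connected :: "vtx set \<Rightarrow> vtx \<Rightarrow> bool" where
  "well_connected T x \<longleftrightarrow> threshold x \<le> (\<Sum>y \<in> {y. LD x y} \<inter> T. gain x y)"

definition excess_sum :: "vtx \<Rightarrow> real" where
  "excess_sum x = (\<Sum>y \<in> {y. LD x y}. excess x y)"

definition cost :: "vtx \<Rightarrow> real" where
  "cost x = 2 * (L * sqrt d * (snd x)\<^sup>2 * real (a x) + excess_sum x)"

lemma finite_LD_nbhd: "finite {y. LD x y}"
proof (rule finite_subset[OF _ finite_support])
  show "{y. LD x y} \<subseteq> support" using LD_support by blast
qed

lemma excess_sum_nonneg: "0 \<le> excess_sum x"
  unfolding excess_sum_def by (intro sum_nonneg) (simp add: excess_nonneg)

lemma cost_nonneg: "0 \<le> cost x"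
  unfolding cost_def using excess_sum_nonneg[of x] L_ge by simp

text \<open>A vertex violating the degree condition in \<open>T\<close> has edge charge into \<open>T\<close> at most
  \<open>L \<surd>d w\<^sup>2 a + excess_sum\<close>: summing \<open>pterm_bound\<close>, the gain part is bounded by the threshold.\<close>
lemma vertex_loss:
  assumes "x \<in> support" and "\<not> well_connected T x"
  shows "(\<Sum>y \<in> {y. LD x y} \<inter> T. pterm x y) \<le> L * sqrt d * (snd x)\<^sup>2 * real (a x) + excess_sum x"
proof (cases "{y. LD x y} \<inter> T = {}")
  case True
  have "0 \<le> L * sqrt d * (snd x)\<^sup>2 * real (a x)" using L_ge by simp
  then show ?thesis using True excess_sum_nonneg[of x] by simp
next
  case False
  then obtain y0 where "LD x y0" by auto
  then have K: "0 < scale x" by (rule scale_pos)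
  define c where "c = 4 * sqrt d * (snd x)\<^sup>2 / scale x"
  have "0 \<le> c" using K unfolding c_def by simp
  have "(\<Sum>y \<in> {y. LD x y} \<inter> T. pterm x y) \<le> (\<Sum>y \<in> {y. LD x y} \<inter> T. c * gain x y + excess x y)"
    unfolding c_def by (intro sum_mono pterm_bound) simp
  also have "\<dots> = c * (\<Sum>y \<in> {y. LD x y} \<inter> T. gain x y) + (\<Sum>y \<in> {y. LD x y} \<inter> T. excess x y)"
    by (simp add: sum.distrib sum_distrib_left)
  also have "(\<Sum>y \<in> {y. LD x y} \<inter> T. excess x y) \<le> excess_sum x"
    unfolding excess_sum_def using finite_LD_nbhd by (intro sum_mono2) (auto intro: excess_nonneg)
  also have "c * (\<Sum>y \<in> {y. LD x y} \<inter> T. gain x y) \<le> c * threshold x"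
    using assms(2) \<open>0 \<le> c\<close> unfolding well_connected_def by (intro mult_left_mono) auto
  also have "c * threshold x = L * sqrt d * (snd x)\<^sup>2 * real (a x)"
    using assms(1) K unfolding c_def threshold_def scale_def support_def by (simp add: field_simps)
  finally show ?thesis by simp
qed

lemma pterm_sym:
  assumes "LD x y"
  shows "pterm y x = pterm x y"
  unfolding pterm_def LD_eps_sym[OF assms] by (simp add: ac_simps)

lemma removal_cost:
  assumes "U \<subseteq> support" "x \<in> U" "\<not> well_connected U x"
  shows "pair_sum LD pterm U - pair_sum LD pterm (U - {x}) \<le> cost x"
proof -
  have "finite U" using assms(1) finite_support by (rule finite_subset)
  have sym: "LD v u \<and> pterm v u = pterm u v" if "LD u v" for u v
    using LD_sym[OF that] pterm_sym[OF that] by simp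
  have "pair_sum LD pterm U = pair_sum LD pterm (U - {x}) + 2 * (\<Sum>y \<in> {y. LD x y} \<inter> U. pterm x y)"
    using pair_sum_remove[OF \<open>finite U\<close> assms(2) LD_irrefl sym] .
  then show ?thesis using vertex_loss[OF _ assms(3)] assms(1,2) unfolding cost_def by auto
qed

text \<open>Weight ratios into a fixed vertex \<open>y\<close>: the neighbours lie in at most \<open>d\<close> columns of \<open>H\<close>,
  each contributing at most \<open>2\<surd>d\<close> by the dyadic bound.\<close>
lemma ratio_sum: "(\<Sum>x \<in> {x \<in> support. LD x y}. snd y / snd x) \<le> real d * (2 * sqrt d)"
proof (cases "{x \<in> support. LD x y} = {}")
  case True
  then show ?thesis unfolding True by simp
next
  case False
  then obtain x0 where x0: "LD x0 y" by auto
  define X where "X = {x \<in> support. LD x y}"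
  have finX: "finite X" using finite_support unfolding X_def by simp
  have y: "fst y \<in> {1..h}" "snd y \<in> Dpos n h" using LD_Gvert[OF x0] by (auto simp: Gvert_def)
  have npos: "n > 0" "h > 0" using LD_pos(3)[OF x0] y(1) by auto
  have card_fst: "card (fst ` X) \<le> d"
  proof -
    have card: "card {i. Hadj (fst y) i} = d" using regular y(1) unfolding regular_graph_def by blast
    then have "finite {i. Hadj (fst y) i}" using two_le_d by (intro card_ge_0_finite) simp
    moreover have "fst ` X \<subseteq> {i. Hadj (fst y) i}"
    proof
      fix i assume "i \<in> fst ` X"
      then obtain x where "x \<in> X" "i = fst x" by blast
      then have "LD y x" using LD_sym unfolding X_def by blast
      then show "i \<in> {i. Hadj (fst y) i}" using \<open>i = fst x\<close> by (simp add: LDadj_def Gadj_def)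
    qed
    ultimately show ?thesis using card card_mono by fastforce
  qed
  have layer: "(\<Sum>x \<in> {x \<in> X. fst x = i}. snd y / snd x) \<le> 2 * sqrt d" for i
  proof -
    have "inj_on snd {x \<in> X. fst x = i}" by (intro inj_onI) (auto simp: prod_eq_iff)
    then have "(\<Sum>x \<in> {x \<in> X. fst x = i}. snd y / snd x) = (\<Sum>w \<in> snd ` {x \<in> X. fst x = i}. snd y / w)"
      by (simp add: sum.reindex)
    also have "\<dots> \<le> 2 * sqrt d"
    proof (rule dyadic_ratio_sum[OF npos _ _ y(2)])
      show "finite (snd ` {x \<in> X. fst x = i})" using finX by simp
      show "snd ` {x \<in> X. fst x = i} \<subseteq> Dpos n h"
      proof
        fix w assume "w \<in> snd ` {x \<in> X. fst x = i}"
        then obtain x where "LD x y" "w = snd x" unfolding X_def by blast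
        then show "w \<in> Dpos n h" using LD_Gvert[of x y] by (auto simp: Gvert_def)
      qed
      show "\<forall>w \<in> snd ` {x \<in> X. fst x = i}. snd y / w < sqrt d"
        using LD_weight_ratio unfolding X_def by auto
    qed simp
    finally show ?thesis .
  qed
  have "(\<Sum>x \<in> X. snd y / snd x) = (\<Sum>i \<in> fst ` X. \<Sum>x \<in> {x \<in> X. fst x = i}. snd y / snd x)"
    using finX by (rule sum.image_gen)
  also have "\<dots> \<le> (\<Sum>i \<in> fst ` X. 2 * sqrt d)" by (intro sum_mono layer)
  also have "\<dots> = real (card (fst ` X)) * (2 * sqrt d)" by simp
  also have "\<dots> \<le> real d * (2 * sqrt d)" using card_fst by (intro mult_right_mono) auto
  finally show ?thesis unfolding X_def .
qed

text \<open>Total excess over the support: exchange the order of summation and use \<open>excess_le\<close>,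
  \<open>ratio_sum\<close> and \<open>\<Sum> w\<^sup>2 a \<le> 10\<close>.\<close>
lemma excess_sum_total: "(\<Sum>x \<in> support. excess_sum x) \<le> 40 * exp 1 * sqrt d"
proof -
  define f where "f x y = (if LD x y then excess x y else 0)" for x y
  have "excess_sum x = (\<Sum>y \<in> support. f x y)" for x
  proof -
    have "{y. LD x y} = {y \<in> support. LD x y}" using LD_support by blast
    then show ?thesis
      unfolding excess_sum_def f_def using finite_support by (simp add: sum.inter_filter)
  qed
  then have "(\<Sum>x \<in> support. excess_sum x) = (\<Sum>y \<in> support. \<Sum>x \<in> support. f x y)"
    using sum.swap by simp
  also have "\<dots> \<le> (\<Sum>y \<in> support. 4 * exp 1 * sqrt d * ((snd y)\<^sup>2 * real (a y)))"
  proof (rule sum_mono)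
    fix y
    define C where "C = 2 * exp 1 * (snd y)\<^sup>2 * real (a y) / real d"
    have "0 \<le> C" unfolding C_def by simp
    have "(\<Sum>x \<in> support. f x y) = (\<Sum>x \<in> {x \<in> support. LD x y}. excess x y)"
      unfolding f_def using finite_support by (simp add: sum.inter_filter)
    also have "\<dots> \<le> (\<Sum>x \<in> {x \<in> support. LD x y}. C * (snd y / snd x))"
    proof (rule sum_mono)
      fix x assume "x \<in> {x \<in> support. LD x y}"
      then have "LD x y" by simp
      from excess_le[OF this] show "excess x y \<le> C * (snd y / snd x)"
        unfolding C_def by (simp add: ac_simps)
    qed
    also have "\<dots> = C * (\<Sum>x \<in> {x \<in> support. LD x y}. snd y / snd x)"
      by (simp add: sum_distrib_left)
    also have "\<dots> \<le> C * (real d * (2 * sqrt d))"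
      using ratio_sum \<open>0 \<le> C\<close> by (rule mult_left_mono)
    also have "\<dots> = 4 * exp 1 * sqrt d * ((snd y)\<^sup>2 * real (a y))"
      unfolding C_def using two_le_d by simp
    finally show "(\<Sum>x \<in> support. f x y) \<le> 4 * exp 1 * sqrt d * ((snd y)\<^sup>2 * real (a y))" .
  qed
  also have "\<dots> = 4 * exp 1 * sqrt d * (\<Sum>y \<in> support. (snd y)\<^sup>2 * real (a y))"
    by (simp add: sum_distrib_left)
  also have "\<dots> \<le> 4 * exp 1 * sqrt d * 10"
    using support_mass by (intro mult_left_mono) auto
  finally show ?thesis by simp
qed

lemma cost_total: "(\<Sum>x \<in> support. cost x) \<le> 60 * L * sqrt d"
proof -
  have "(\<Sum>x \<in> support. cost x)
      = 2 * (L * sqrt d) * (\<Sum>x \<in> support. (snd x)\<^sup>2 * real (a x)) + 2 * (\<Sum>x \<in> support. excess_sum x)"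
    unfolding cost_def by (simp add: sum.distrib sum_distrib_left algebra_simps)
  also have "\<dots> \<le> 2 * (L * sqrt d) * 10 + 2 * (40 * exp 1 * sqrt d)"
    using support_mass excess_sum_total L_ge by (intro add_mono mult_left_mono) auto
  also have "\<dots> \<le> 60 * L * sqrt d"
  proof -
    have "80 * exp 1 \<le> 40 * L" using exp_le L_ge by simp
    then have "80 * exp 1 * sqrt d \<le> 40 * L * sqrt d" by (rule mult_right_mono) simp
    then show ?thesis by simp
  qed
  finally show ?thesis .
qed

text \<open>Edge charges are nonnegative, so \<open>p\<^sub>L\<^sub>D\<close> needs no absolute value here.\<close>
lemma pterm_nonneg:
  assumes "LD x y"
  shows "0 \<le> pterm x y"
proof -
  have "0 \<le> eps n a e x y"
    using assms exp1_sq_minus_one_ge_one by (simp add: LDadj_def)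
  then show ?thesis unfolding pterm_def using LD_weights_pos[OF assms] by simp
qed

lemma LD_sub_iff:
  "LDadj Hadj d n h (sub_a S a) (sub_e S e) x y \<longleftrightarrow> LD x y \<and> x \<in> S \<and> y \<in> S"
proof (cases "x \<in> S \<and> y \<in> S")
  case True
  then have "eps n (sub_a S a) (sub_e S e) x y = eps n a e x y"
    unfolding eps_def sub_a_def sub_e_def by simp
  then show ?thesis using True unfolding LDadj_def by simp
next
  case False
  then have "eps n (sub_a S a) (sub_e S e) x y = 1"
    unfolding eps_def sub_a_def by auto
  then show ?thesis using False exp1_sq_minus_one_ge_one unfolding LDadj_def by auto
qed

lemma pLD_sub: "pLD Hadj d n h (sub_a S a) (sub_e S e) = pair_sum LD pterm S / 2"
proof -
  have "(\<Sum>(x, y) \<in> {(x, y). LDadj Hadj d n h (sub_a S a) (sub_e S e) x y}.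
      snd x * snd y * real (sub_a S a x) * real (sub_a S a y) / real n
        * eps n (sub_a S a) (sub_e S e) x y) = pair_sum LD pterm S"
    unfolding pair_sum_def LD_sub_iff
    by (intro sum.cong) (auto simp: pterm_def eps_def sub_a_def sub_e_def)
  moreover have "0 \<le> pair_sum LD pterm S"
    unfolding pair_sum_def by (intro sum_nonneg) (auto intro: pterm_nonneg)
  ultimately show ?thesis unfolding pLD_def by simp
qed

lemma pLD_full: "pLD Hadj d n h a e = pair_sum LD pterm support / 2"
proof -
  have "{(x, y). LD x y} = {(x, y). LD x y \<and> x \<in> support \<and> y \<in> support}"
    using LD_support by blast
  moreover have "0 \<le> pair_sum LD pterm support"
    unfolding pair_sum_def by (intro sum_nonneg) (auto intro: pterm_nonneg)
  ultimately show ?thesis unfolding pLD_def pair_sum_def pterm_def by simp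
qed

theorem well_connected_subpattern:
  "\<exists>S \<subseteq> Gvert n h.
     pLD Hadj d n h (sub_a S a) (sub_e S e) \<ge> pLD Hadj d n h a e - 30 * L * sqrt d \<and>
     (\<forall>x \<in> S. well_connected S x)"
proof -
  obtain S where S: "S \<subseteq> support" "\<forall>x \<in> S. well_connected S x"
    and loss: "pair_sum LD pterm support - pair_sum LD pterm S \<le> (\<Sum>x \<in> support - S. cost x)"
    using greedy_peeling[where Q = "pair_sum LD pterm" and good = well_connected and cost = cost,
        OF finite_support removal_cost] by blast
  have "(\<Sum>x \<in> support - S. cost x) \<le> (\<Sum>x \<in> support. cost x)"
    using finite_support cost_nonneg by (intro sum_mono2) auto
  then have "pair_sum LD pterm support - pair_sum LD pterm S \<le> 60 * L * sqrt d"
    using loss cost_total by linarith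
  then have "pLD Hadj d n h (sub_a S a) (sub_e S e) \<ge> pLD Hadj d n h a e - 30 * L * sqrt d"
    unfolding pLD_sub pLD_full by simp
  moreover have "S \<subseteq> Gvert n h" using S(1) support_Gvert by (rule order_trans)
  ultimately show ?thesis using S(2) by (intro exI[of _ S]) simp
qed

end

theorem proposition5p2:
  fixes Hadj :: "nat \<Rightarrow> nat \<Rightarrow> bool" and d n h :: nat and L :: real
    and a :: "vtx \<Rightarrow> nat" and e :: "vtx \<Rightarrow> vtx \<Rightarrow> nat"
  assumes "d \<ge> 2"
    and "regular_graph Hadj h d"
    and "L \<ge> 20"
    and "is_pattern Hadj d n h a e"
  shows "\<exists>S \<subseteq> Gvert n h.
     pLD Hadj d n h (sub_a S a) (sub_e S e) \<ge> pLD Hadj d n h a e - 30 * L * sqrt (real d) \<and>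
     (\<forall>x \<in> S.
        (\<Sum>y \<in> {y. LDadj Hadj d n h a e x y} \<inter> S.
           real (a x) * real (a y) / real n * (1 + eps n a e x y / 2) * ln (1 + eps n a e x y))
        \<ge> (if a x = 0 then 0 else L / 4 * real (a x) * ln (exp 1 * real n / real (a x))))"
proof -
  interpret pattern_setting Hadj d n h L a e
    using assms by unfold_locales
  show ?thesis
    using well_connected_subpattern
    unfolding well_connected_def threshold_def gain_def .
qed

end
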